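(* Let $\Omega\subset\mathbb{R}^d$ be a compact set, $\mu$ a positive finite measure on $\Omega$ with $\mu(\Omega)>0$, and $n\ge 0$ an integer. Let $S(f)=\sum_{i=1}^M w_i f(\mathbf{x}_i)$ be a cubature rule with nodes $\mathbf{x}_i\in\Omega$ and positive weights $w_i>0$. Let $\{\phi_j\}_{j=1}^{d_n}$ be a $\mu$-orthonormal basis of $\mathbb{P}_n$ (polynomials of total degree at most $n$, $d_n=\dim\mathbb{P}_n$), and let $G=(S(\phi_i\phi_j))_{1\le i,j\le d_n}$. Suppose there are constants $A>0$, $B>0$ such that $$A\,\|p\|_{L^2}^2\le S(p^2)\le B\,\|p\|_{L^2}^2\quad\text{for all }p\in\mathbb{P}_n,$$ where $\|p\|_{L^2}^2=\int_\Omega p^2\,d\mu$, and that $\eta:=\max\{|A-1|,|B-1|\}<1$. For $f\in C(\Omega)$ define the weighted least-squares polynomial $$\mathcal{G}_nf=\sum_{j=1}^{d_n}c_j\phi_j,\qquad (c_1,\dots,c_{d_n})^T=G^{-1}\bigl(S(f\phi_1),\dots,S(f\phi_{d_n})\bigr)^T.$$ Then for every $f\in C(\Omega)$, $$\|f-\mathcal{G}_nf\|_{L^2}\le\Bigl(1+\sqrt{\mathrm{cond}_2(G)}\Bigr)\sqrt{\mu(\Omega)}\,E_n(f)\le\Bigl(1+\sqrt{\tfrac{1+\eta}{1-\eta}}\Bigr)\sqrt{\mu(\Omega)}\,E_n(f),$$ and, if in addition the rule is exact on constants (i.e. $\sum_{i=1}^M w_i=\mu(\Omega)$), $$\|f-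\mathcal{G}_nf\|_{L^2}\le\Bigl(1+\tfrac{1}{\sqrt{A}}\Bigr)\sqrt{\mu(\Omega)}\,E_n(f)\le\Bigl(1+\tfrac{1}{\sqrt{1-\eta}}\Bigr)\sqrt{\mu(\Omega)}\,E_n(f).$$
   Context: $E_n(f)=\min_{p\in\mathbb{P}_n}\|f-p\|_{\infty}$ is the error of best uniform polynomial approximation of degree $n$ on $\Omega$. $\mathrm{cond}_2(G)=\lambda_{\max}(G)/\lambda_{\min}(G)$ is the spectral condition number of the symmetric positive definite matrix $G$. The $L^2$ norm is taken with respect to $\mu$. *)

theory Defs
  imports "HOL-Analysis.Analysis"
begin

definition monomial :: "('d::finite \<Rightarrow> nat) \<Rightarrow> real^'d \<Rightarrow> real" where
  "monomial \<alpha> x = (\<Prod>i\<in>UNIV. (x $ i) ^ (\<alpha> i))"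

definition polys :: "nat \<Rightarrow> (real^'d::finite \<Rightarrow> real) set" where
  "polys n = {p. \<exists>c :: ('d \<Rightarrow> nat) \<Rightarrow> real.
                  p = (\<lambda>x. \<Sum>\<alpha>\<in>{\<alpha>. sum \<alpha> UNIV \<le> n}. c \<alpha> * monomial \<alpha> x)}"

definition cub :: "(nat \<Rightarrow> real) \<Rightarrow> (nat \<Rightarrow> 'a) \<Rightarrow> nat \<Rightarrow> ('a \<Rightarrow> real) \<Rightarrow> real" where
  "cub w xs M g = (\<Sum>i<M. w i * g (xs i))"

definition L2norm :: "'a measure \<Rightarrow> ('a \<Rightarrow> real) \<Rightarrow> real" where
  "L2norm \<mu> g = sqrt (\<integral>x. (g x)\<^sup>2 \<partial>\<mu>)"

definition best_approx_err :: "nat \<Rightarrow> (real^'d::finite) set \<Rightarrow> (real^'d \<Rightarrow> real) \<Rightarrow> real" where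
  "best_approx_err n \<Omega> f = (INF p\<in>polys n. (SUP x\<in>\<Omega>. \<bar>f x - p x\<bar>))"

definition is_eigenvalue :: "(nat \<Rightarrow> nat \<Rightarrow> real) \<Rightarrow> nat \<Rightarrow> real \<Rightarrow> bool" where
  "is_eigenvalue G N ev \<longleftrightarrow> (\<exists>v. (\<exists>i<N. v i \<noteq> 0) \<and> (\<forall>i<N. (\<Sum>j<N. G i j * v j) = ev * v i))"

definition cond2 :: "(nat \<Rightarrow> nat \<Rightarrow> real) \<Rightarrow> nat \<Rightarrow> real" where
  "cond2 G N = Max {ev. is_eigenvalue G N ev} / Min {ev. is_eigenvalue G N ev}"

definition gram :: "(nat \<Rightarrow> real) \<Rightarrow> (nat \<Rightarrow> 'a) \<Rightarrow> nat \<Rightarrow> (nat \<Rightarrow> 'a \<Rightarrow> real) \<Rightarrow> nat \<Rightarrow> nat \<Rightarrow> real" where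
  "gram w xs M \<phi> i j = cub w xs M (\<lambda>x. \<phi> i x * \<phi> j x)"

definition lsq_coeffs :: "(nat \<Rightarrow> real) \<Rightarrow> (nat \<Rightarrow> 'a) \<Rightarrow> nat \<Rightarrow> (nat \<Rightarrow> 'a \<Rightarrow> real) \<Rightarrow> nat
    \<Rightarrow> ('a \<Rightarrow> real) \<Rightarrow> nat \<Rightarrow> real" where
  "lsq_coeffs w xs M \<phi> N f = (THE c. (\<forall>i<N. (\<Sum>j<N. gram w xs M \<phi> i j * c j) = cub w xs M (\<lambda>x. f x * \<phi> i x))
                                  \<and> (\<forall>j\<ge>N. c j = 0))"

definition lsq_approx :: "(nat \<Rightarrow> real) \<Rightarrow> (nat \<Rightarrow> 'a) \<Rightarrow> nat \<Rightarrow> (nat \<Rightarrow> 'a \<Rightarrow> real) \<Rightarrow> nat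
    \<Rightarrow> ('a \<Rightarrow> real) \<Rightarrow> 'a \<Rightarrow> real" where
  "lsq_approx w xs M \<phi> N f = (\<lambda>x. \<Sum>j<N. lsq_coeffs w xs M \<phi> N f j * \<phi> j x)"

end

theory Submission
  imports Defs "Jordan_Normal_Form.Spectral_Radius"
begin

text \<open>
  The least-squares coefficients c solve the Gram system G c = (S(f phi_i))_i. For a polynomial
  p = sum_j a_j phi_j the difference d = c - a therefore solves G d = (S((f - p) phi_i))_i, so
  d^T G d = S((sum_j d_j phi_j)^2) = S((f - p) sum_j d_j phi_j), and the arithmetic-geometric mean
  inequality gives d^T G d <= S((f - p)^2) <= S(1) |f - p|_inf^2. The Marcinkiewicz-Zygmund
  inequality A |c|^2 <= c^T G c <= B |c|^2 places the extreme eigenvalues of G, obtained by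
  minimising and maximising the Rayleigh quotient, in [A, B]; moreover S(1) = a^T G a <= lambda_max mu(Omega)
  for the coefficients a of the constant 1. As sum_j d_j phi_j has L2 norm |d| by orthonormality,
  |d|^2 <= cond_2(G) mu(Omega) |f - p|_inf^2, or |d|^2 <= mu(Omega) |f - p|_inf^2 / A if S(1) = mu(Omega).
  Writing f - G_n f = (f - p) - sum_j d_j phi_j and taking the infimum over p gives the bounds.
\<close>

definition quad_form :: "(nat \<Rightarrow> nat \<Rightarrow> real) \<Rightarrow> nat \<Rightarrow> (nat \<Rightarrow> real) \<Rightarrow> real" where
  "quad_form H N c = (\<Sum>i<N. c i * (\<Sum>j<N. H i j * c j))"

definition sum_squares :: "nat \<Rightarrow> (nat \<Rightarrow> real) \<Rightarrow> real" where
  "sum_squares N c = (\<Sum>i<N. (c i)\<^sup>2)"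

definition basis_sum :: "(nat \<Rightarrow> 'a \<Rightarrow> real) \<Rightarrow> nat \<Rightarrow> (nat \<Rightarrow> real) \<Rightarrow> 'a \<Rightarrow> real" where
  "basis_sum \<phi> N c x = (\<Sum>j<N. c j * \<phi> j x)"

lemma sum_squares_nonneg: "0 \<le> sum_squares N c"
  unfolding sum_squares_def by (intro sum_nonneg) auto

lemma sum_squares_eq_0_iff: "sum_squares N c = 0 \<longleftrightarrow> (\<forall>i<N. c i = 0)"
  unfolding sum_squares_def by (subst sum_nonneg_eq_0_iff) auto

lemma sum_squares_pos: "\<exists>i<N. c i \<noteq> 0 \<Longrightarrow> 0 < sum_squares N c"
  using sum_squares_nonneg[of N c] sum_squares_eq_0_iff[of N c] by auto

lemma sum_squares_smult: "sum_squares N (\<lambda>i. t * c i) = t\<^sup>2 * sum_squares N c"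
  unfolding sum_squares_def by (simp add: sum_distrib_left power_mult_distrib)

lemma quad_form_smult: "quad_form H N (\<lambda>i. t * c i) = t\<^sup>2 * quad_form H N c"
  unfolding quad_form_def by (simp add: sum_distrib_left algebra_simps power2_eq_square)

lemma sum_squares_cong: "(\<And>i. i < N \<Longrightarrow> c i = d i) \<Longrightarrow> sum_squares N c = sum_squares N d"
  unfolding sum_squares_def by (intro sum.cong) auto

lemma quad_form_cong: "(\<And>i. i < N \<Longrightarrow> c i = d i) \<Longrightarrow> quad_form H N c = quad_form H N d"
  unfolding quad_form_def by (intro sum.cong) auto

lemma quad_form_uminus: "quad_form (\<lambda>i j. - H i j) N c = - quad_form H N c"
  unfolding quad_form_def by (simp add: sum_negf)

lemma sum_squares_add_smult:
  "sum_squares N (\<lambda>i. x i + t * y i)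
     = sum_squares N x + 2 * t * (\<Sum>i<N. y i * x i) + t\<^sup>2 * sum_squares N y"
  unfolding sum_squares_def
  by (simp add: algebra_simps sum.distrib sum_distrib_left power2_eq_square)

lemma quad_form_add_smult:
  assumes sym: "\<forall>i<N. \<forall>j<N. H i j = H j i"
  shows "quad_form H N (\<lambda>i. x i + t * y i)
           = quad_form H N x + 2 * t * (\<Sum>i<N. y i * (\<Sum>j<N. H i j * x j)) + t\<^sup>2 * quad_form H N y"
proof -
  have "(\<Sum>i<N. x i * (\<Sum>j<N. H i j * y j)) = (\<Sum>j<N. \<Sum>i<N. x i * H i j * y j)"
    by (subst sum.swap) (simp add: sum_distrib_left mult.assoc)
  also have "\<dots> = (\<Sum>j<N. y j * (\<Sum>i<N. H j i * x i))"
    using sym by (auto simp: sum_distrib_left intro!: sum.cong)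
  finally have "(\<Sum>i<N. x i * (\<Sum>j<N. H i j * y j)) = (\<Sum>i<N. y i * (\<Sum>j<N. H i j * x j))" .
  moreover have "quad_form H N (\<lambda>i. x i + t * y i) = quad_form H N x
      + t * (\<Sum>i<N. x i * (\<Sum>j<N. H i j * y j)) + t * (\<Sum>i<N. y i * (\<Sum>j<N. H i j * x j))
      + t\<^sup>2 * quad_form H N y"
    unfolding quad_form_def by (simp add: algebra_simps sum.distrib sum_distrib_left power2_eq_square)
  ultimately show ?thesis by simp
qed

lemma quad_form_eigenvector:
  assumes "\<forall>i<N. (\<Sum>j<N. H i j * u j) = ev * u i"
  shows "quad_form H N u = ev * sum_squares N u"
proof -
  have "quad_form H N u = (\<Sum>i<N. u i * (ev * u i))"
    unfolding quad_form_def using assms by (intro sum.cong) auto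
  then show ?thesis by (simp add: sum_squares_def sum_distrib_left power2_eq_square mult_ac)
qed

lemma eigenvalue_ge_Rayleigh_lower_bound:
  assumes "is_eigenvalue H N ev" and lower: "\<And>c. a * sum_squares N c \<le> quad_form H N c"
  shows "a \<le> ev"
proof -
  obtain u where nz: "\<exists>i<N. u i \<noteq> 0" and eig: "\<forall>i<N. (\<Sum>j<N. H i j * u j) = ev * u i"
    using assms(1) unfolding is_eigenvalue_def by blast
  have "0 < sum_squares N u" using sum_squares_pos[OF nz] .
  with lower[of u] show ?thesis by (simp add: quad_form_eigenvector[OF eig])
qed

lemma eigenvalue_le_Rayleigh_upper_bound:
  assumes "is_eigenvalue H N ev" and upper: "\<And>c. quad_form H N c \<le> b * sum_squares N c"
  shows "ev \<le> b"
proof -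
  obtain u where nz: "\<exists>i<N. u i \<noteq> 0" and eig: "\<forall>i<N. (\<Sum>j<N. H i j * u j) = ev * u i"
    using assms(1) unfolding is_eigenvalue_def by blast
  have "0 < sum_squares N u" using sum_squares_pos[OF nz] .
  with upper[of u] show ?thesis by (simp add: quad_form_eigenvector[OF eig])
qed

lemma linear_plus_quadratic_nonneg_imp_zero:
  fixes a b :: real
  assumes nonneg: "\<And>t. 0 \<le> a * t + b * t\<^sup>2"
  shows "a = 0"
proof -
  have "\<bar>a\<bar> \<le> 0 + e" if "0 < e" for e
  proof -
    define t where "t = e / (\<bar>b\<bar> + 1)"
    have t: "0 < t" "\<bar>b\<bar> * t \<le> e"
      using \<open>0 < e\<close> by (auto simp: t_def field_simps)
    have "\<bar>a\<bar> * t \<le> b * t\<^sup>2"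
      using nonneg[of t] nonneg[of "- t"] by (cases "0 \<le> a") auto
    then have "\<bar>a\<bar> \<le> b * t"
      using t(1) by (simp add: power2_eq_square mult.assoc)
    also have "\<dots> \<le> \<bar>b\<bar> * t"
      using t(1) by (intro mult_right_mono) auto
    finally show ?thesis using t(2) by simp
  qed
  then show ?thesis by (metis abs_le_zero_iff field_le_epsilon)
qed

lemma compact_coeff_sphere:
  "compact (Pi UNIV (\<lambda>i::nat. if i < N then {-1..1::real} else {0}) \<inter> {v. sum_squares N v = 1})"
proof (rule compact_Int_closed)
  have "compactin (product_topology (\<lambda>i. euclidean) UNIV)
          (PiE UNIV (\<lambda>i::nat. if i < N then {-1..1::real} else {0}))"
    by (subst compactin_PiE) auto
  then show "compact (Pi UNIV (\<lambda>i::nat. if i < N then {-1..1::real} else {0}))"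
    by (simp add: euclidean_product_topology PiE_UNIV_domain)
  have "continuous_on UNIV (sum_squares N)"
    unfolding sum_squares_def by (intro continuous_intros continuous_on_product_coordinates)
  then show "closed {v. sum_squares N v = 1}" by (intro closed_Collect_eq) auto
qed

lemma unit_coeffs_in_box:
  assumes "sum_squares N u = 1" and "\<forall>i\<ge>N. u i = 0"
  shows "u \<in> Pi UNIV (\<lambda>i::nat. if i < N then {-1..1::real} else {0})"
proof (rule Pi_I)
  fix i
  show "u i \<in> (if i < N then {-1..1} else {0})"
  proof (cases "i < N")
    case True
    then have "(u i)\<^sup>2 \<le> 1"
      using assms(1) member_le_sum[of i "{..<N}" "\<lambda>i. (u i)\<^sup>2"] by (simp add: sum_squares_def)
    then show ?thesis using True by (simp add: abs_square_le_1 abs_le_iff)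
  qed (use assms(2) in simp)
qed

lemma normalized_coeffs:
  assumes "0 < sum_squares N c"
  obtains u where "sum_squares N u = 1" and "\<forall>i\<ge>N. u i = 0"
    and "quad_form H N u = quad_form H N c / sum_squares N c"
proof
  define s where "s = sqrt (sum_squares N c)"
  have s: "0 < s" "s\<^sup>2 = sum_squares N c"
    using assms by (auto simp: s_def)
  define u where "u = (\<lambda>i. if i < N then (1 / s) * c i else 0)"
  have "sum_squares N u = (1 / s)\<^sup>2 * sum_squares N c"
    unfolding sum_squares_smult[symmetric] by (rule sum_squares_cong) (simp add: u_def)
  then show "sum_squares N u = 1" using s assms by (simp add: power_divide)
  show "\<forall>i\<ge>N. u i = 0" by (simp add: u_def)
  have "quad_form H N u = (1 / s)\<^sup>2 * quad_form H N c"
    unfolding quad_form_smult[symmetric] by (rule quad_form_cong) (simp add: u_def)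
  then show "quad_form H N u = quad_form H N c / sum_squares N c"
    using s by (simp add: power_divide)
qed

lemma Rayleigh_minimizer_exists:
  assumes "0 < N"
  obtains v where "sum_squares N v = 1"
    and "\<And>c. quad_form H N v * sum_squares N c \<le> quad_form H N c"
proof -
  define sphere where
    "sphere = Pi UNIV (\<lambda>i::nat. if i < N then {-1..1::real} else {0}) \<inter> {v. sum_squares N v = 1}"
  have quad_form_cont: "continuous_on UNIV (quad_form H N)"
    unfolding quad_form_def by (intro continuous_intros continuous_on_product_coordinates)
  have "compact sphere" unfolding sphere_def by (rule compact_coeff_sphere)
  define e0 :: "nat \<Rightarrow> real" where "e0 = (\<lambda>i. if i = 0 then 1 else 0)"
  have "sum_squares N e0 = (\<Sum>i<N. if i = 0 then 1 else 0)"
    unfolding sum_squares_def e0_def by (intro sum.cong) auto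
  then have "sum_squares N e0 = 1" using assms by simp
  then have "e0 \<in> sphere"
    unfolding sphere_def using assms by (intro IntI CollectI unit_coeffs_in_box) (auto simp: e0_def)
  then obtain v where "v \<in> sphere" and min: "\<forall>u\<in>sphere. quad_form H N v \<le> quad_form H N u"
    using continuous_attains_inf[OF \<open>compact sphere\<close> _ continuous_on_subset[OF quad_form_cont]]
    by blast
  show ?thesis
  proof (rule that)
    show "sum_squares N v = 1" using \<open>v \<in> sphere\<close> by (simp add: sphere_def)
    fix c
    show "quad_form H N v * sum_squares N c \<le> quad_form H N c"
    proof (cases "sum_squares N c = 0")
      case True
      then have "quad_form H N c = quad_form H N (\<lambda>_. 0)"
        by (intro quad_form_cong) (simp add: sum_squares_eq_0_iff)
      with True show ?thesis by (simp add: quad_form_def)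
    next
      case False
      then have "0 < sum_squares N c" using sum_squares_nonneg[of N c] by linarith
      then obtain u where "sum_squares N u = 1" "\<forall>i\<ge>N. u i = 0"
        and u: "quad_form H N u = quad_form H N c / sum_squares N c"
        using normalized_coeffs by blast
      then have "u \<in> sphere"
        unfolding sphere_def by (intro IntI CollectI unit_coeffs_in_box) auto
      with min have "quad_form H N v \<le> quad_form H N u" by blast
      with u \<open>0 < sum_squares N c\<close> show ?thesis by (simp add: pos_le_divide_eq)
    qed
  qed
qed

text \<open>A minimiser v of the Rayleigh quotient, with minimum m, is an eigenvector: its residual
  r = H v - m v satisfies 0 <= 2 t |r|^2 + O(t^2) for all real t, so r = 0.\<close>

lemma Rayleigh_minimizer_eigenvector:
  assumes sym: "\<forall>i<N. \<forall>j<N. H i j = H j i" and unit: "sum_squares N v = 1"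
    and min: "\<And>c. quad_form H N v * sum_squares N c \<le> quad_form H N c"
  shows "\<forall>i<N. (\<Sum>j<N. H i j * v j) = quad_form H N v * v i"
proof -
  define m where "m = quad_form H N v"
  define r where "r = (\<lambda>i. (\<Sum>j<N. H i j * v j) - m * v i)"
  have residual: "(\<Sum>i<N. r i * (\<Sum>j<N. H i j * v j)) - m * (\<Sum>i<N. r i * v i) = sum_squares N r"
    unfolding sum_squares_def r_def
    by (simp add: sum_distrib_left sum_subtractf[symmetric] algebra_simps power2_eq_square)
  have "0 \<le> (2 * sum_squares N r) * t + (quad_form H N r - m * sum_squares N r) * t\<^sup>2" for t
    using min[of "\<lambda>i. v i + t * r i"] residual unit
    unfolding quad_form_add_smult[OF sym] sum_squares_add_smult m_def[symmetric]
    by (simp add: algebra_simps)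
  then have "2 * sum_squares N r = 0"
    by (rule linear_plus_quadratic_nonneg_imp_zero)
  then have "\<forall>i<N. r i = 0" using sum_squares_eq_0_iff by simp
  then show ?thesis by (simp add: r_def m_def)
qed

lemma mat_mult_vec_index:
  "i < N \<Longrightarrow> vec_index (mat N N (\<lambda>(i, j). G i j) *\<^sub>v vec N v) i = (\<Sum>j<N. G i j * v j)"
  by (simp add: scalar_prod_def row_def atLeast0LessThan)

lemma finite_eigenvalues: "finite {ev. is_eigenvalue G N ev}"
proof -
  define GM where "GM = mat N N (\<lambda>(i, j). G i j)"
  have GM: "GM \<in> carrier_mat N N" unfolding GM_def by simp
  have "{ev. is_eigenvalue G N ev} \<subseteq> spectrum GM"
  proof
    fix ev assume "ev \<in> {ev. is_eigenvalue G N ev}"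
    then obtain v where nz: "\<exists>i<N. v i \<noteq> 0" and eig: "\<forall>i<N. (\<Sum>j<N. G i j * v j) = ev * v i"
      unfolding is_eigenvalue_def by auto
    have "vec N v \<noteq> 0\<^sub>v N"
    proof
      assume zero: "vec N v = 0\<^sub>v N"
      have "v i = 0" if "i < N" for i
        using arg_cong[OF zero, of "\<lambda>u. vec_index u i"] that by simp
      with nz show False by blast
    qed
    moreover have "GM *\<^sub>v vec N v = ev \<cdot>\<^sub>v vec N v"
    proof (rule eq_vecI)
      fix i assume "i < dim_vec (ev \<cdot>\<^sub>v vec N v)"
      then have i: "i < N" by simp
      show "vec_index (GM *\<^sub>v vec N v) i = vec_index (ev \<cdot>\<^sub>v vec N v) i"
        unfolding GM_def mat_mult_vec_index[OF i] using eig i by simp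
    qed (simp add: GM_def)
    ultimately have "eigenvector GM (vec N v) ev"
      using GM by (simp add: eigenvector_def)
    then show "ev \<in> spectrum GM" unfolding spectrum_def eigenvalue_def by auto
  qed
  then show ?thesis using card_finite_spectrum(1)[OF GM] finite_subset by blast
qed

lemma symmetric_min_eigenvalue:
  assumes sym: "\<forall>i<N. \<forall>j<N. H i j = H j i" and "0 < N"
  obtains m where "is_eigenvalue H N m" and "\<And>c. m * sum_squares N c \<le> quad_form H N c"
proof -
  obtain v where v: "sum_squares N v = 1"
    and lower: "\<And>c. quad_form H N v * sum_squares N c \<le> quad_form H N c"
    using Rayleigh_minimizer_exists[OF \<open>0 < N\<close>] by blast
  have "\<exists>i<N. v i \<noteq> 0" using v sum_squares_eq_0_iff[of N v] by auto
  then have "is_eigenvalue H N (quad_form H N v)"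
    unfolding is_eigenvalue_def using Rayleigh_minimizer_eigenvector[OF sym v lower] by blast
  then show ?thesis using lower by (rule that)
qed

lemma is_eigenvalue_uminus:
  assumes "is_eigenvalue (\<lambda>i j. - H i j) N m"
  shows "is_eigenvalue H N (- m)"
proof -
  obtain u where nz: "\<exists>i<N. u i \<noteq> 0" and eig: "\<forall>i<N. (\<Sum>j<N. - H i j * u j) = m * u i"
    using assms unfolding is_eigenvalue_def by blast
  have "(\<Sum>j<N. H i j * u j) = - m * u i" if "i < N" for i
  proof -
    have "- (\<Sum>j<N. H i j * u j) = m * u i" using eig that by (simp add: sum_negf)
    then show ?thesis by simp
  qed
  with nz show ?thesis unfolding is_eigenvalue_def by blast
qed

lemma symmetric_extreme_eigenvalues:
  assumes sym: "\<forall>i<N. \<forall>j<N. H i j = H j i" and "0 < N"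
  obtains lmin lmax where "is_eigenvalue H N lmin" "is_eigenvalue H N lmax"
    and "\<And>c. lmin * sum_squares N c \<le> quad_form H N c"
    and "\<And>c. quad_form H N c \<le> lmax * sum_squares N c"
    and "cond2 H N = lmax / lmin"
proof -
  obtain lmin where lmin: "is_eigenvalue H N lmin"
    and lower: "\<And>c. lmin * sum_squares N c \<le> quad_form H N c"
    using symmetric_min_eigenvalue[OF sym \<open>0 < N\<close>] by blast
  have sym': "\<forall>i<N. \<forall>j<N. - H i j = - H j i" using sym by simp
  obtain m where m: "is_eigenvalue (\<lambda>i j. - H i j) N m"
    and lower': "\<And>c. m * sum_squares N c \<le> quad_form (\<lambda>i j. - H i j) N c"
    using symmetric_min_eigenvalue[where H = "\<lambda>i j. - H i j", OF sym' \<open>0 < N\<close>] by blast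
  define lmax where "lmax = - m"
  have lmax: "is_eigenvalue H N lmax"
    unfolding lmax_def using m by (rule is_eigenvalue_uminus)
  have upper: "quad_form H N c \<le> lmax * sum_squares N c" for c
    using lower'[of c] by (simp add: lmax_def quad_form_uminus)
  have "Min {ev. is_eigenvalue H N ev} = lmin"
    using lmin eigenvalue_ge_Rayleigh_lower_bound[OF _ lower]
    by (intro Min_eqI finite_eigenvalues) auto
  moreover have "Max {ev. is_eigenvalue H N ev} = lmax"
    using lmax eigenvalue_le_Rayleigh_upper_bound[OF _ upper]
    by (intro Max_eqI finite_eigenvalues) auto
  ultimately have "cond2 H N = lmax / lmin" by (simp add: cond2_def)
  with lmin lmax lower upper show ?thesis by (rule that)
qed

lemma det_nonzero_if_injective:
  fixes G :: "nat \<Rightarrow> nat \<Rightarrow> real"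
  assumes inj: "\<forall>c. (\<forall>i<N. (\<Sum>j<N. G i j * c j) = 0) \<longrightarrow> (\<forall>i<N. c i = 0)"
  shows "det (mat N N (\<lambda>(i, j). G i j)) \<noteq> 0"
proof
  define GM where "GM = mat N N (\<lambda>(i, j). G i j)"
  have GM: "GM \<in> carrier_mat N N" unfolding GM_def by simp
  assume "det (mat N N (\<lambda>(i, j). G i j)) = 0"
  then obtain v where v: "v \<in> carrier_vec N" "v \<noteq> 0\<^sub>v N" "GM *\<^sub>v v = 0\<^sub>v N"
    using det_0_iff_vec_prod_zero_field[OF GM] by (auto simp: GM_def)
  have v_vec: "v = vec N (vec_index v)" using v(1) by auto
  have "\<forall>i<N. (\<Sum>j<N. G i j * vec_index v j) = 0"
  proof (intro allI impI)
    fix i assume i: "i < N"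
    have "vec_index (GM *\<^sub>v v) i = 0" using v(3) i by simp
    then show "(\<Sum>j<N. G i j * vec_index v j) = 0"
      unfolding GM_def by (subst (asm) v_vec) (simp only: mat_mult_vec_index[OF i])
  qed
  with inj have "\<forall>i<N. vec_index v i = 0" by blast
  then have "v = 0\<^sub>v N" using v(1) by (intro eq_vecI) auto
  with v(2) show False ..
qed

lemma ex1_solution_of_injective_system:
  fixes G :: "nat \<Rightarrow> nat \<Rightarrow> real"
  assumes inj: "\<forall>c. (\<forall>i<N. (\<Sum>j<N. G i j * c j) = 0) \<longrightarrow> (\<forall>i<N. c i = 0)"
  shows "\<exists>!c. (\<forall>i<N. (\<Sum>j<N. G i j * c j) = b i) \<and> (\<forall>j\<ge>N. c j = 0)"
proof -
  define GM where "GM = mat N N (\<lambda>(i, j). G i j)"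
  have GM: "GM \<in> carrier_mat N N" unfolding GM_def by simp
  have "det GM \<noteq> 0" unfolding GM_def by (rule det_nonzero_if_injective[OF inj])
  then have "GM \<in> Units (ring_mat TYPE(real) N ())" by (rule det_non_zero_imp_unit[OF GM])
  then obtain GI where GI: "GI \<in> carrier_mat N N" "GM * GI = 1\<^sub>m N"
    unfolding Units_def by (auto simp: ring_mat_def)
  define c where "c = (\<lambda>j. if j < N then vec_index (GI *\<^sub>v vec N b) j else 0)"
  have "GM *\<^sub>v vec N c = vec N b"
  proof -
    have "vec N c = GI *\<^sub>v vec N b" using GI by (auto simp: c_def)
    then show ?thesis using GI GM by (simp add: assoc_mult_mat_vec[symmetric, of _ N N _ N])
  qed
  have sol: "\<forall>i<N. (\<Sum>j<N. G i j * c j) = b i"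
  proof (intro allI impI)
    fix i assume i: "i < N"
    have "vec_index (GM *\<^sub>v vec N c) i = b i" using \<open>GM *\<^sub>v vec N c = vec N b\<close> i by simp
    then show "(\<Sum>j<N. G i j * c j) = b i" unfolding GM_def mat_mult_vec_index[OF i] .
  qed
  show ?thesis
  proof (rule ex1I[of _ c])
    show "(\<forall>i<N. (\<Sum>j<N. G i j * c j) = b i) \<and> (\<forall>j\<ge>N. c j = 0)" using sol by (simp add: c_def)
  next
    fix d assume d: "(\<forall>i<N. (\<Sum>j<N. G i j * d j) = b i) \<and> (\<forall>j\<ge>N. d j = 0)"
    then have "\<forall>i<N. (\<Sum>j<N. G i j * (d j - c j)) = 0"
      using sol by (simp add: algebra_simps sum_subtractf)
    then have "\<forall>i<N. d i - c i = 0" using inj[rule_format, of "\<lambda>j. d j - c j"] by blast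
    with d show "d = c" by (intro ext) (auto simp: c_def not_less)
  qed
qed

lemma finite_multi_indices: "finite {\<alpha>::'d::finite \<Rightarrow> nat. sum \<alpha> UNIV \<le> n}"
proof (rule finite_subset)
  show "{\<alpha>::'d \<Rightarrow> nat. sum \<alpha> UNIV \<le> n} \<subseteq> PiE UNIV (\<lambda>_. {..n})"
  proof
    fix \<alpha> :: "'d \<Rightarrow> nat" assume "\<alpha> \<in> {\<alpha>. sum \<alpha> UNIV \<le> n}"
    then have "\<alpha> i \<le> n" for i using member_le_sum[of i UNIV \<alpha>] by auto
    then show "\<alpha> \<in> PiE UNIV (\<lambda>_. {..n})" by auto
  qed
qed (intro finite_PiE, auto)

lemma continuous_on_polys: "p \<in> polys n \<Longrightarrow> continuous_on S p"
  unfolding polys_def monomial_def by (auto intro!: continuous_intros)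

lemma one_in_polys: "(\<lambda>x::real^'d::finite. 1) \<in> polys n"
proof -
  define c :: "('d \<Rightarrow> nat) \<Rightarrow> real" where "c = (\<lambda>\<alpha>. if \<alpha> = (\<lambda>_. 0) then 1 else 0)"
  have "(\<Sum>\<alpha>\<in>{\<alpha>. sum \<alpha> UNIV \<le> n}. c \<alpha> * monomial \<alpha> x) = 1" for x :: "real^'d"
  proof -
    have "(\<Sum>\<alpha>\<in>{\<alpha>. sum \<alpha> UNIV \<le> n}. c \<alpha> * monomial \<alpha> x)
        = (\<Sum>\<alpha>\<in>{\<alpha>. sum \<alpha> UNIV \<le> n}. if \<alpha> = (\<lambda>_. 0) then monomial \<alpha> x else 0)"
      by (intro sum.cong) (auto simp: c_def)
    also have "\<dots> = 1"
      by (subst sum.delta[OF finite_multi_indices]) (simp add: monomial_def)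
    finally show ?thesis .
  qed
  then have "(\<lambda>x::real^'d. 1) = (\<lambda>x. \<Sum>\<alpha>\<in>{\<alpha>. sum \<alpha> UNIV \<le> n}. c \<alpha> * monomial \<alpha> x)"
    by (simp add: fun_eq_iff)
  then show ?thesis unfolding polys_def by (intro CollectI exI[of _ c])
qed

lemma basis_sum_in_polys:
  assumes "\<forall>j<N. \<phi> j \<in> polys n"
  shows "basis_sum \<phi> N c \<in> polys n"
proof -
  have "\<forall>j<N. \<exists>C. \<phi> j = (\<lambda>x. \<Sum>\<alpha>\<in>{\<alpha>. sum \<alpha> UNIV \<le> n}. C \<alpha> * monomial \<alpha> x)"
    using assms unfolding polys_def by blast
  then obtain C where C: "\<forall>j<N. \<phi> j = (\<lambda>x. \<Sum>\<alpha>\<in>{\<alpha>. sum \<alpha> UNIV \<le> n}. C j \<alpha> * monomial \<alpha> x)"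
    by metis
  have "basis_sum \<phi> N c = (\<lambda>x. \<Sum>j<N. \<Sum>\<alpha>\<in>{\<alpha>. sum \<alpha> UNIV \<le> n}. c j * C j \<alpha> * monomial \<alpha> x)"
    using C by (auto intro!: ext sum.cong simp: basis_sum_def sum_distrib_left mult.assoc)
  also have "\<dots> = (\<lambda>x. \<Sum>\<alpha>\<in>{\<alpha>. sum \<alpha> UNIV \<le> n}. (\<Sum>j<N. c j * C j \<alpha>) * monomial \<alpha> x)"
    by (intro ext) (subst sum.swap, simp add: sum_distrib_right)
  finally show ?thesis unfolding polys_def by (intro CollectI exI[of _ "\<lambda>\<alpha>. \<Sum>j<N. c j * C j \<alpha>"])
qed

lemma borel_measurable_continuous_on_sets_restrict:
  assumes "sets \<mu> = sets (restrict_space lborel \<Omega>)" and "continuous_on \<Omega> h"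
  shows "h \<in> borel_measurable \<mu>"
proof -
  have "sets \<mu> = sets (restrict_space borel \<Omega>)"
    using assms(1) sets_restrict_space_cong[of lborel borel \<Omega>] by simp
  then show ?thesis
    using borel_measurable_continuous_on_restrict[OF assms(2)] measurable_cong_sets by blast
qed

lemma integrable_continuous_on_compact:
  fixes h :: "'a::euclidean_space \<Rightarrow> real"
  assumes sets: "sets \<mu> = sets (restrict_space lborel \<Omega>)" and "finite_measure \<mu>"
    and "compact \<Omega>" and h: "continuous_on \<Omega> h"
  shows "integrable \<mu> h"
proof -
  obtain K where K: "\<forall>x\<in>\<Omega>. norm (h x) \<le> K"
    using compact_imp_bounded[OF compact_continuous_image[OF h \<open>compact \<Omega>\<close>]]
    unfolding bounded_iff by auto
  have "space \<mu> = \<Omega>"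
    using sets_eq_imp_space_eq[OF sets] by (simp add: space_restrict_space)
  then show ?thesis
    using K borel_measurable_continuous_on_sets_restrict[OF sets h]
    by (intro finite_measure.integrable_const_bound[OF \<open>finite_measure \<mu>\<close>, of _ K]) auto
qed

lemma integral_square_basis_sum_orthonormal:
  assumes int: "\<forall>i<N. \<forall>j<N. integrable \<mu> (\<lambda>x. \<phi> i x * \<phi> j x)"
    and orth: "\<forall>i<N. \<forall>j<N. (\<integral>x. \<phi> i x * \<phi> j x \<partial>\<mu>) = (if i = j then 1 else 0)"
  shows "(\<integral>x. (basis_sum \<phi> N c x)\<^sup>2 \<partial>\<mu>) = sum_squares N c"
proof -
  have "(\<integral>x. (basis_sum \<phi> N c x)\<^sup>2 \<partial>\<mu>)
      = (\<integral>x. (\<Sum>i<N. \<Sum>j<N. (c i * c j) * (\<phi> i x * \<phi> j x)) \<partial>\<mu>)"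
    unfolding basis_sum_def power2_eq_square sum_product
    by (intro Bochner_Integration.integral_cong refl sum.cong) (simp add: algebra_simps)
  also have "\<dots> = (\<Sum>i<N. \<integral>x. (\<Sum>j<N. (c i * c j) * (\<phi> i x * \<phi> j x)) \<partial>\<mu>)"
    using int by (intro Bochner_Integration.integral_sum Bochner_Integration.integrable_sum
        integrable_mult_right) auto
  also have "\<dots> = (\<Sum>i<N. \<Sum>j<N. (c i * c j) * (\<integral>x. \<phi> i x * \<phi> j x \<partial>\<mu>))"
    using int by (intro sum.cong refl) (simp add: Bochner_Integration.integral_sum integrable_mult_right)
  also have "\<dots> = (\<Sum>i<N. \<Sum>j<N. (c i * c j) * (if i = j then 1 else 0))"
    using orth by (intro sum.cong refl) auto
  also have "\<dots> = sum_squares N c" unfolding sum_squares_def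
    by (intro sum.cong refl) (simp add: if_distrib sum.delta sum.delta' power2_eq_square cong: if_cong)
  finally show ?thesis .
qed

lemma square_diff_le_weighted:
  fixes a b t :: real
  assumes "0 < t"
  shows "(a - b)\<^sup>2 \<le> (1 + t) * a\<^sup>2 + (1 + 1 / t) * b\<^sup>2"
proof -
  have "0 \<le> (t * a + b)\<^sup>2 / t" using assms by simp
  also have "(t * a + b)\<^sup>2 / t = t * a\<^sup>2 + 2 * a * b + b\<^sup>2 / t"
    using assms by (simp add: field_simps power2_eq_square)
  finally show ?thesis by (simp add: power2_eq_square algebra_simps add_divide_distrib)
qed

lemma sqrt_integral_square_diff_le:
  fixes g q :: "'a \<Rightarrow> real"
  assumes ig: "integrable \<mu> (\<lambda>x. (g x)\<^sup>2)" and iq: "integrable \<mu> (\<lambda>x. (q x)\<^sup>2)"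
    and igq: "integrable \<mu> (\<lambda>x. (g x - q x)\<^sup>2)" and "0 < K"
    and bg: "(\<integral>x. (g x)\<^sup>2 \<partial>\<mu>) \<le> X" and bq: "(\<integral>x. (q x)\<^sup>2 \<partial>\<mu>) \<le> K * X"
  shows "sqrt (\<integral>x. (g x - q x)\<^sup>2 \<partial>\<mu>) \<le> (1 + sqrt K) * sqrt X"
proof -
  define t where "t = sqrt K"
  have t: "0 < t" unfolding t_def using \<open>0 < K\<close> by simp
  have "0 \<le> (\<integral>x. (g x)\<^sup>2 \<partial>\<mu>)" by (rule Bochner_Integration.integral_nonneg) simp
  then have "0 \<le> X" using bg by linarith
  have "(\<integral>x. (g x - q x)\<^sup>2 \<partial>\<mu>) \<le> (\<integral>x. (1 + t) * (g x)\<^sup>2 + (1 + 1 / t) * (q x)\<^sup>2 \<partial>\<mu>)"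
    using ig iq igq square_diff_le_weighted[OF t] by (intro integral_mono) auto
  also have "\<dots> = (1 + t) * (\<integral>x. (g x)\<^sup>2 \<partial>\<mu>) + (1 + 1 / t) * (\<integral>x. (q x)\<^sup>2 \<partial>\<mu>)"
    using ig iq by simp
  also have "\<dots> \<le> (1 + t) * X + (1 + 1 / t) * (K * X)"
    using bg bq t by (intro add_mono mult_left_mono) auto
  also have "\<dots> = (1 + t)\<^sup>2 * X"
    using t \<open>0 < K\<close> by (simp add: t_def field_simps power2_eq_square)
  finally have "sqrt (\<integral>x. (g x - q x)\<^sup>2 \<partial>\<mu>) \<le> sqrt ((1 + t)\<^sup>2 * X)" by simp
  also have "\<dots> = (1 + t) * sqrt X" using t by (simp add: real_sqrt_mult)
  finally show ?thesis unfolding t_def .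
qed

lemma cub_cong:
  "(\<And>i. i < M \<Longrightarrow> g (xs i) = h (xs i)) \<Longrightarrow> cub w xs M g = cub w xs M h"
  unfolding cub_def by (intro sum.cong) auto

lemma cub_diff: "cub w xs M (\<lambda>x. g x - h x) = cub w xs M g - cub w xs M h"
  unfolding cub_def by (simp add: sum_subtractf right_diff_distrib)

lemma cub_const: "cub w xs M (\<lambda>_. a) = (\<Sum>i<M. w i) * a"
  unfolding cub_def by (simp add: sum_distrib_right)

lemma cub_mono:
  assumes "\<forall>i<M. 0 \<le> w i" and "\<And>i. i < M \<Longrightarrow> g (xs i) \<le> h (xs i)"
  shows "cub w xs M g \<le> cub w xs M h"
  unfolding cub_def using assms by (intro sum_mono mult_left_mono) auto

lemma cub_square_le_const:
  assumes "\<forall>i<M. 0 \<le> w i" and "\<And>i. i < M \<Longrightarrow> \<bar>g (xs i)\<bar> \<le> s"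
  shows "cub w xs M (\<lambda>x. (g x)\<^sup>2) \<le> (\<Sum>i<M. w i) * s\<^sup>2"
proof -
  have "(g (xs i))\<^sup>2 \<le> s\<^sup>2" if "i < M" for i
    using power_mono[OF assms(2)[OF that], of 2] by simp
  then have "cub w xs M (\<lambda>x. (g x)\<^sup>2) \<le> cub w xs M (\<lambda>_. s\<^sup>2)"
    using assms(1) by (intro cub_mono)
  then show ?thesis by (simp add: cub_const)
qed

lemma cub_mult_le:
  assumes "\<forall>i<M. 0 \<le> w i"
  shows "cub w xs M (\<lambda>x. g x * h x) \<le> (cub w xs M (\<lambda>x. (g x)\<^sup>2) + cub w xs M (\<lambda>x. (h x)\<^sup>2)) / 2"
proof -
  have "g x * h x \<le> ((g x)\<^sup>2 + (h x)\<^sup>2) / 2" for x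
  proof -
    have "0 \<le> (g x - h x)\<^sup>2" by simp
    then show ?thesis by (simp add: power2_eq_square algebra_simps)
  qed
  then have "cub w xs M (\<lambda>x. g x * h x) \<le> cub w xs M (\<lambda>x. ((g x)\<^sup>2 + (h x)\<^sup>2) / 2)"
    using assms by (intro cub_mono)
  also have "\<dots> = (cub w xs M (\<lambda>x. (g x)\<^sup>2) + cub w xs M (\<lambda>x. (h x)\<^sup>2)) / 2"
    unfolding cub_def by (simp add: sum.distrib sum_divide_distrib ring_distribs add_divide_distrib)
  finally show ?thesis .
qed

lemma cub_square_basis_sum:
  "cub w xs M (\<lambda>x. (basis_sum \<phi> N c x)\<^sup>2) = quad_form (gram w xs M \<phi>) N c"
proof -
  have "cub w xs M (\<lambda>x. (basis_sum \<phi> N c x)\<^sup>2)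
      = (\<Sum>k<M. \<Sum>i<N. \<Sum>j<N. c i * (w k * \<phi> i (xs k) * \<phi> j (xs k)) * c j)"
    unfolding cub_def basis_sum_def power2_eq_square sum_product sum_distrib_left
    by (intro sum.cong refl) (simp add: algebra_simps sum_distrib_left)
  also have "\<dots> = (\<Sum>i<N. \<Sum>j<N. \<Sum>k<M. c i * (w k * \<phi> i (xs k) * \<phi> j (xs k)) * c j)"
    by (subst sum.swap) (intro sum.cong refl sum.swap)
  also have "\<dots> = quad_form (gram w xs M \<phi>) N c"
    unfolding quad_form_def gram_def cub_def sum_distrib_left sum_distrib_right
    by (intro sum.cong refl) (simp add: algebra_simps)
  finally show ?thesis .
qed

lemma gram_mult_coeffs:
  "(\<Sum>j<N. gram w xs M \<phi> i j * a j) = cub w xs M (\<lambda>x. basis_sum \<phi> N a x * \<phi> i x)"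
  unfolding gram_def cub_def basis_sum_def sum_distrib_left sum_distrib_right
  by (subst sum.swap) (simp add: algebra_simps)

lemma sum_mult_cub_basis:
  "(\<Sum>i<N. d i * cub w xs M (\<lambda>x. g x * \<phi> i x)) = cub w xs M (\<lambda>x. g x * basis_sum \<phi> N d x)"
  unfolding cub_def basis_sum_def sum_distrib_left
  by (subst sum.swap) (simp add: algebra_simps)

lemma abs_le_SUP_abs:
  fixes g :: "'a::topological_space \<Rightarrow> real"
  assumes "compact \<Omega>" and "continuous_on \<Omega> g" and "x \<in> \<Omega>"
  shows "\<bar>g x\<bar> \<le> (SUP y\<in>\<Omega>. \<bar>g y\<bar>)"
proof (rule cSUP_upper[OF \<open>x \<in> \<Omega>\<close>])
  have "compact ((\<lambda>y. \<bar>g y\<bar>) ` \<Omega>)"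
    using assms by (intro compact_continuous_image continuous_intros)
  then show "bdd_above ((\<lambda>y. \<bar>g y\<bar>) ` \<Omega>)"
    by (intro bounded_imp_bdd_above compact_imp_bounded)
qed

lemma SUP_abs_nonneg:
  fixes g :: "'a::topological_space \<Rightarrow> real"
  assumes "compact \<Omega>" and "continuous_on \<Omega> g" and "\<Omega> \<noteq> {}"
  shows "0 \<le> (SUP y\<in>\<Omega>. \<bar>g y\<bar>)"
proof -
  obtain x where "x \<in> \<Omega>" using assms(3) by blast
  then show ?thesis using abs_le_SUP_abs[OF assms(1,2)] by (meson abs_ge_zero order_trans)
qed

locale weighted_least_squares =
  fixes \<Omega> :: "(real^'d) set" and \<mu> :: "(real^'d) measure" and n :: nat
    and M :: nat and xs :: "nat \<Rightarrow> real^'d" and w :: "nat \<Rightarrow> real"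
    and N :: nat and \<phi> :: "nat \<Rightarrow> real^'d \<Rightarrow> real" and A B :: real
  assumes compact_\<Omega>: "compact \<Omega>"
    and sets_\<mu>: "sets \<mu> = sets (restrict_space lborel \<Omega>)"
    and finite_\<mu>: "finite_measure \<mu>"
    and measure_\<Omega>_pos: "0 < measure \<mu> \<Omega>"
    and nodes: "\<forall>i<M. xs i \<in> \<Omega>"
    and weights: "\<forall>i<M. w i > 0"
    and basis_poly: "\<forall>j<N. \<phi> j \<in> polys n"
    and orthonormal: "\<forall>i<N. \<forall>j<N. (\<integral>x. \<phi> i x * \<phi> j x \<partial>\<mu>) = (if i = j then 1 else 0)"
    and spanning: "\<forall>p\<in>polys n. \<exists>c. \<forall>x\<in>\<Omega>. p x = (\<Sum>j<N. c j * \<phi> j x)"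
    and A_pos: "0 < A"
    and MZ: "\<forall>p\<in>polys n. A * (L2norm \<mu> p)\<^sup>2 \<le> cub w xs M (\<lambda>x. (p x)\<^sup>2)
                          \<and> cub w xs M (\<lambda>x. (p x)\<^sup>2) \<le> B * (L2norm \<mu> p)\<^sup>2"
begin

abbreviation "S \<equiv> cub w xs M"
abbreviation "G \<equiv> gram w xs M \<phi>"
abbreviation "P \<equiv> basis_sum \<phi> N"

lemma space_\<mu>: "space \<mu> = \<Omega>"
  using sets_eq_imp_space_eq[OF sets_\<mu>] by (simp add: space_restrict_space)

lemma \<Omega>_nonempty: "\<Omega> \<noteq> {}"
  using measure_\<Omega>_pos by auto

lemma weights_nonneg: "\<forall>i<M. 0 \<le> w i"
  using weights by (simp add: less_imp_le)

lemma integrable_continuous: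
  fixes h :: "real^'d \<Rightarrow> real"
  shows "continuous_on \<Omega> h \<Longrightarrow> integrable \<mu> h"
  by (rule integrable_continuous_on_compact[OF sets_\<mu> finite_\<mu> compact_\<Omega>])

lemma integral_square_le_measure:
  fixes g :: "real^'d \<Rightarrow> real"
  assumes "continuous_on \<Omega> g" and "\<And>x. x \<in> \<Omega> \<Longrightarrow> \<bar>g x\<bar> \<le> s"
  shows "(\<integral>x. (g x)\<^sup>2 \<partial>\<mu>) \<le> measure \<mu> \<Omega> * s\<^sup>2"
proof -
  have "(\<integral>x. (g x)\<^sup>2 \<partial>\<mu>) \<le> (\<integral>x. s\<^sup>2 \<partial>\<mu>)"
  proof (rule integral_mono)
    show "integrable \<mu> (\<lambda>x. (g x)\<^sup>2)"
      using assms(1) by (intro integrable_continuous continuous_intros)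
    show "integrable \<mu> (\<lambda>x. s\<^sup>2)" by (rule finite_measure.integrable_const[OF finite_\<mu>])
    fix x assume "x \<in> space \<mu>"
    then show "(g x)\<^sup>2 \<le> s\<^sup>2"
      using power_mono[OF assms(2), of x 2] space_\<mu> by simp
  qed
  then show ?thesis using space_\<mu> by simp
qed

lemma continuous_on_basis_sum: "continuous_on \<Omega> (P c)"
  using basis_sum_in_polys[OF basis_poly] by (rule continuous_on_polys)

lemma integral_square_basis_sum: "(\<integral>x. (P c x)\<^sup>2 \<partial>\<mu>) = sum_squares N c"
proof (rule integral_square_basis_sum_orthonormal[OF _ orthonormal], intro allI impI)
  fix i j assume "i < N" "j < N"
  then show "integrable \<mu> (\<lambda>x. \<phi> i x * \<phi> j x)"
    using basis_poly by (intro integrable_continuous continuous_on_mult continuous_on_polys) auto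
qed

lemma gram_quad_form_bounds:
  "A * sum_squares N c \<le> quad_form G N c" "quad_form G N c \<le> B * sum_squares N c"
proof -
  have "(L2norm \<mu> (P c))\<^sup>2 = sum_squares N c"
    unfolding L2norm_def using integral_square_basis_sum sum_squares_nonneg by simp
  moreover have "A * (L2norm \<mu> (P c))\<^sup>2 \<le> S (\<lambda>x. (P c x)\<^sup>2) \<and> S (\<lambda>x. (P c x)\<^sup>2) \<le> B * (L2norm \<mu> (P c))\<^sup>2"
    using MZ basis_sum_in_polys[OF basis_poly] by blast
  ultimately show "A * sum_squares N c \<le> quad_form G N c" "quad_form G N c \<le> B * sum_squares N c"
    by (simp_all add: cub_square_basis_sum)
qed

lemma gram_symmetric: "\<forall>i<N. \<forall>j<N. G i j = G j i"
  unfolding gram_def by (simp add: mult.commute)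

lemma lsq_coeffs_solve:
  "\<forall>i<N. (\<Sum>j<N. G i j * lsq_coeffs w xs M \<phi> N f j) = S (\<lambda>x. f x * \<phi> i x)"
proof -
  have "\<forall>c. (\<forall>i<N. (\<Sum>j<N. G i j * c j) = 0) \<longrightarrow> (\<forall>i<N. c i = 0)"
  proof (rule allI, rule impI)
    fix c assume "\<forall>i<N. (\<Sum>j<N. G i j * c j) = 0"
    then have "A * sum_squares N c \<le> 0"
      using gram_quad_form_bounds(1)[of c] by (simp add: quad_form_def)
    then have "sum_squares N c = 0"
      using A_pos sum_squares_nonneg[of N c] by (simp add: mult_le_0_iff)
    then show "\<forall>i<N. c i = 0" by (simp add: sum_squares_eq_0_iff)
  qed
  then have "\<exists>!c. (\<forall>i<N. (\<Sum>j<N. G i j * c j) = S (\<lambda>x. f x * \<phi> i x)) \<and> (\<forall>j\<ge>N. c j = 0)"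
    by (rule ex1_solution_of_injective_system)
  from theI'[OF this] show ?thesis
    unfolding lsq_coeffs_def by (rule conjunct1)
qed

lemma constant_one_coeffs:
  obtains a where "sum_squares N a = measure \<mu> \<Omega>" and "quad_form G N a = (\<Sum>i<M. w i)"
proof -
  obtain a where a: "\<forall>x\<in>\<Omega>. 1 = P a x"
    using spanning[rule_format, OF one_in_polys] unfolding basis_sum_def by blast
  have "(\<integral>x. (P a x)\<^sup>2 \<partial>\<mu>) = (\<integral>x. 1 \<partial>\<mu>)"
    using a space_\<mu> by (intro Bochner_Integration.integral_cong) auto
  then have "sum_squares N a = measure \<mu> \<Omega>"
    using space_\<mu> integral_square_basis_sum by simp
  moreover have "quad_form G N a = S (\<lambda>_. 1)"
    unfolding cub_square_basis_sum[symmetric] using a nodes by (intro cub_cong) auto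
  ultimately show ?thesis by (intro that) (simp_all add: cub_const)
qed

lemma N_pos: "0 < N"
proof (rule ccontr)
  obtain a where "sum_squares N a = measure \<mu> \<Omega>"
    using constant_one_coeffs by blast
  moreover assume "\<not> 0 < N"
  ultimately show False using measure_\<Omega>_pos by (simp add: sum_squares_def)
qed

lemma gram_extreme_eigenvalues:
  obtains lmin lmax where "A \<le> lmin" "lmax \<le> B" "lmin \<le> lmax"
    and "\<And>c. lmin * sum_squares N c \<le> quad_form G N c"
    and "\<And>c. quad_form G N c \<le> lmax * sum_squares N c"
    and "cond2 G N = lmax / lmin"
proof -
  obtain lmin lmax where eig: "is_eigenvalue G N lmin" "is_eigenvalue G N lmax"
    and lower: "\<And>c. lmin * sum_squares N c \<le> quad_form G N c"
    and upper: "\<And>c. quad_form G N c \<le> lmax * sum_squares N c"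
    and cond: "cond2 G N = lmax / lmin"
    using symmetric_extreme_eigenvalues[OF gram_symmetric N_pos] by blast
  show ?thesis
  proof (rule that[OF _ _ _ lower upper cond])
    show "A \<le> lmin"
      using eigenvalue_ge_Rayleigh_lower_bound[OF eig(1) gram_quad_form_bounds(1)] .
    show "lmax \<le> B"
      using eigenvalue_le_Rayleigh_upper_bound[OF eig(2) gram_quad_form_bounds(2)] .
    show "lmin \<le> lmax"
      using eigenvalue_le_Rayleigh_upper_bound[OF eig(1) upper] .
  qed
qed

lemma cond2_gram_le: "cond2 G N \<le> B / A"
proof (rule gram_extreme_eigenvalues)
  fix lmin lmax
  assume bounds: "A \<le> lmin" "lmax \<le> B" "lmin \<le> lmax" and cond: "cond2 G N = lmax / lmin"
  have "lmax / lmin \<le> B / A"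
    by (rule frac_le) (use bounds A_pos in linarith)+
  then show ?thesis by (simp add: cond)
qed

lemma lsq_error_decomposition:
  assumes "p \<in> polys n"
  obtains d where "\<forall>x\<in>\<Omega>. f x - lsq_approx w xs M \<phi> N f x = (f x - p x) - P d x"
    and "quad_form G N d \<le> S (\<lambda>x. (f x - p x)\<^sup>2)"
proof -
  define c where "c = lsq_coeffs w xs M \<phi> N f"
  obtain a where a: "\<forall>x\<in>\<Omega>. p x = P a x"
    using spanning[rule_format, OF assms] unfolding basis_sum_def by blast
  define d where "d = (\<lambda>j. c j - a j)"
  have "(\<Sum>j<N. G i j * d j) = S (\<lambda>x. (f x - p x) * \<phi> i x)" if "i < N" for i
  proof -
    have "(\<Sum>j<N. G i j * d j) = (\<Sum>j<N. G i j * c j) - (\<Sum>j<N. G i j * a j)"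
      by (simp add: d_def right_diff_distrib sum_subtractf)
    also have "\<dots> = S (\<lambda>x. f x * \<phi> i x) - S (\<lambda>x. P a x * \<phi> i x)"
      using lsq_coeffs_solve that by (simp add: c_def gram_mult_coeffs)
    also have "S (\<lambda>x. P a x * \<phi> i x) = S (\<lambda>x. p x * \<phi> i x)"
      using a nodes by (intro cub_cong) auto
    also have "S (\<lambda>x. f x * \<phi> i x) - \<dots> = S (\<lambda>x. (f x - p x) * \<phi> i x)"
      by (simp add: left_diff_distrib cub_diff)
    finally show ?thesis .
  qed
  then have "quad_form G N d = S (\<lambda>x. (f x - p x) * P d x)"
    unfolding quad_form_def by (simp add: sum_mult_cub_basis)
  also have "\<dots> \<le> (S (\<lambda>x. (f x - p x)\<^sup>2) + quad_form G N d) / 2"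
    using cub_mult_le[OF weights_nonneg, of xs "\<lambda>x. f x - p x" "P d"]
    by (simp add: cub_square_basis_sum)
  finally have "quad_form G N d \<le> S (\<lambda>x. (f x - p x)\<^sup>2)" by simp
  moreover have "\<forall>x\<in>\<Omega>. f x - lsq_approx w xs M \<phi> N f x = (f x - p x) - P d x"
    using a by (simp add: lsq_approx_def basis_sum_def d_def c_def algebra_simps sum_subtractf)
  ultimately show ?thesis using that by blast
qed

lemma lsq_error_le_poly:
  fixes p :: "real^'d \<Rightarrow> real" and K :: real
  assumes f: "continuous_on \<Omega> f" and p: "p \<in> polys n" and "0 < K"
    and coeff_bound: "\<And>d t. quad_form G N d \<le> (\<Sum>i<M. w i) * t\<^sup>2
                             \<Longrightarrow> sum_squares N d \<le> K * (measure \<mu> \<Omega> * t\<^sup>2)"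
  shows "L2norm \<mu> (\<lambda>x. f x - lsq_approx w xs M \<phi> N f x)
           \<le> (1 + sqrt K) * sqrt (measure \<mu> \<Omega>) * (SUP x\<in>\<Omega>. \<bar>f x - p x\<bar>)"
proof -
  define s where "s = (SUP x\<in>\<Omega>. \<bar>f x - p x\<bar>)"
  have fp: "continuous_on \<Omega> (\<lambda>x. f x - p x)"
    using f continuous_on_polys[OF p] by (intro continuous_intros)
  have s: "\<bar>f x - p x\<bar> \<le> s" if "x \<in> \<Omega>" for x
    unfolding s_def using abs_le_SUP_abs[OF compact_\<Omega> fp that] .
  have "0 \<le> s" unfolding s_def by (rule SUP_abs_nonneg[OF compact_\<Omega> fp \<Omega>_nonempty])
  obtain d where d: "\<forall>x\<in>\<Omega>. f x - lsq_approx w xs M \<phi> N f x = (f x - p x) - P d x"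
    and qd: "quad_form G N d \<le> S (\<lambda>x. (f x - p x)\<^sup>2)"
    using lsq_error_decomposition[OF p] by blast
  have "S (\<lambda>x. (f x - p x)\<^sup>2) \<le> (\<Sum>i<M. w i) * s\<^sup>2"
    using nodes s by (intro cub_square_le_const[OF weights_nonneg]) auto
  with qd have "quad_form G N d \<le> (\<Sum>i<M. w i) * s\<^sup>2" by linarith
  then have "sum_squares N d \<le> K * (measure \<mu> \<Omega> * s\<^sup>2)" by (rule coeff_bound)
  then have bound_d: "(\<integral>x. (P d x)\<^sup>2 \<partial>\<mu>) \<le> K * (measure \<mu> \<Omega> * s\<^sup>2)"
    by (simp add: integral_square_basis_sum)
  have bound_fp: "(\<integral>x. (f x - p x)\<^sup>2 \<partial>\<mu>) \<le> measure \<mu> \<Omega> * s\<^sup>2"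
    using fp s by (rule integral_square_le_measure)
  have int_fp: "integrable \<mu> (\<lambda>x. (f x - p x)\<^sup>2)"
    using f continuous_on_polys[OF p] by (intro integrable_continuous continuous_intros)
  have int_d: "integrable \<mu> (\<lambda>x. (P d x)\<^sup>2)"
    using continuous_on_basis_sum by (intro integrable_continuous continuous_intros)
  have int_diff: "integrable \<mu> (\<lambda>x. ((f x - p x) - P d x)\<^sup>2)"
    using f continuous_on_polys[OF p] continuous_on_basis_sum
    by (intro integrable_continuous continuous_intros)
  have "(\<integral>x. (f x - lsq_approx w xs M \<phi> N f x)\<^sup>2 \<partial>\<mu>) = (\<integral>x. ((f x - p x) - P d x)\<^sup>2 \<partial>\<mu>)"
  proof (rule Bochner_Integration.integral_cong[OF refl])
    fix x assume "x \<in> space \<mu>"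
    then have "f x - lsq_approx w xs M \<phi> N f x = (f x - p x) - P d x" using d space_\<mu> by blast
    then show "(f x - lsq_approx w xs M \<phi> N f x)\<^sup>2 = ((f x - p x) - P d x)\<^sup>2" by (simp only:)
  qed
  then have "L2norm \<mu> (\<lambda>x. f x - lsq_approx w xs M \<phi> N f x)
      = sqrt (\<integral>x. ((f x - p x) - P d x)\<^sup>2 \<partial>\<mu>)"
    by (simp add: L2norm_def)
  also have "\<dots> \<le> (1 + sqrt K) * sqrt (measure \<mu> \<Omega> * s\<^sup>2)"
    by (rule sqrt_integral_square_diff_le[OF int_fp int_d int_diff \<open>0 < K\<close> bound_fp bound_d])
  also have "\<dots> = (1 + sqrt K) * sqrt (measure \<mu> \<Omega>) * s"
    using \<open>0 \<le> s\<close> by (simp add: real_sqrt_mult)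
  finally show ?thesis by (simp add: s_def)
qed

lemma lsq_error_le_if_coeff_bound:
  fixes K :: real
  assumes f: "continuous_on \<Omega> f" and "0 < K"
    and coeff_bound: "\<And>d t. quad_form G N d \<le> (\<Sum>i<M. w i) * t\<^sup>2
                             \<Longrightarrow> sum_squares N d \<le> K * (measure \<mu> \<Omega> * t\<^sup>2)"
  shows "L2norm \<mu> (\<lambda>x. f x - lsq_approx w xs M \<phi> N f x)
           \<le> (1 + sqrt K) * sqrt (measure \<mu> \<Omega>) * best_approx_err n \<Omega> f"
proof -
  define C where "C = (1 + sqrt K) * sqrt (measure \<mu> \<Omega>)"
  have "0 < C" unfolding C_def using \<open>0 < K\<close> measure_\<Omega>_pos by (simp add: add_pos_nonneg)
  have "L2norm \<mu> (\<lambda>x. f x - lsq_approx w xs M \<phi> N f x) / C \<le> best_approx_err n \<Omega> f"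
    unfolding best_approx_err_def
  proof (rule cINF_greatest)
    show "polys n \<noteq> {}" using one_in_polys by blast
    fix p :: "real^'d \<Rightarrow> real" assume "p \<in> polys n"
    then show "L2norm \<mu> (\<lambda>x. f x - lsq_approx w xs M \<phi> N f x) / C \<le> (SUP x\<in>\<Omega>. \<bar>f x - p x\<bar>)"
      using lsq_error_le_poly[OF f _ \<open>0 < K\<close> coeff_bound] \<open>0 < C\<close>
      by (simp add: C_def pos_divide_le_eq mult.commute)
  qed
  with \<open>0 < C\<close> show ?thesis by (simp add: C_def pos_divide_le_eq mult.commute)
qed

lemma lsq_error_le_cond2:
  assumes "continuous_on \<Omega> f"
  shows "L2norm \<mu> (\<lambda>x. f x - lsq_approx w xs M \<phi> N f x)
           \<le> (1 + sqrt (cond2 G N)) * sqrt (measure \<mu> \<Omega>) * best_approx_err n \<Omega> f"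
proof (rule gram_extreme_eigenvalues)
  fix lmin lmax
  assume "A \<le> lmin" "lmin \<le> lmax"
    and lower: "\<And>c. lmin * sum_squares N c \<le> quad_form G N c"
    and upper: "\<And>c. quad_form G N c \<le> lmax * sum_squares N c"
    and cond: "cond2 G N = lmax / lmin"
  then have "0 < lmin" using A_pos by linarith
  obtain a where "sum_squares N a = measure \<mu> \<Omega>" "quad_form G N a = (\<Sum>i<M. w i)"
    using constant_one_coeffs by blast
  then have sum_w: "(\<Sum>i<M. w i) \<le> lmax * measure \<mu> \<Omega>" using upper[of a] by simp
  show ?thesis unfolding cond
  proof (rule lsq_error_le_if_coeff_bound[OF assms])
    show "0 < lmax / lmin" using \<open>0 < lmin\<close> \<open>lmin \<le> lmax\<close> by simp
    fix d and t :: real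
    assume "quad_form G N d \<le> (\<Sum>i<M. w i) * t\<^sup>2"
    also have "\<dots> \<le> lmax * measure \<mu> \<Omega> * t\<^sup>2"
      using sum_w by (simp add: mult_right_mono)
    finally have "lmin * sum_squares N d \<le> lmax * measure \<mu> \<Omega> * t\<^sup>2"
      using lower[of d] by linarith
    then show "sum_squares N d \<le> lmax / lmin * (measure \<mu> \<Omega> * t\<^sup>2)"
      using \<open>0 < lmin\<close> by (simp add: field_simps)
  qed
qed

lemma lsq_error_le_exact_constants:
  assumes "continuous_on \<Omega> f" and exact: "(\<Sum>i<M. w i) = measure \<mu> \<Omega>"
  shows "L2norm \<mu> (\<lambda>x. f x - lsq_approx w xs M \<phi> N f x)
           \<le> (1 + 1 / sqrt A) * sqrt (measure \<mu> \<Omega>) * best_approx_err n \<Omega> f"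
proof -
  have "L2norm \<mu> (\<lambda>x. f x - lsq_approx w xs M \<phi> N f x)
           \<le> (1 + sqrt (1 / A)) * sqrt (measure \<mu> \<Omega>) * best_approx_err n \<Omega> f"
  proof (rule lsq_error_le_if_coeff_bound[OF assms(1)])
    show "0 < 1 / A" using A_pos by simp
    fix d and t :: real
    assume "quad_form G N d \<le> (\<Sum>i<M. w i) * t\<^sup>2"
    then have "quad_form G N d \<le> measure \<mu> \<Omega> * t\<^sup>2" by (simp add: exact)
    then have "A * sum_squares N d \<le> measure \<mu> \<Omega> * t\<^sup>2"
      using gram_quad_form_bounds(1)[of d] by linarith
    then show "sum_squares N d \<le> 1 / A * (measure \<mu> \<Omega> * t\<^sup>2)"
      using A_pos by (simp add: field_simps)
  qed
  then show ?thesis by (simp add: real_sqrt_divide)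
qed

lemma best_approx_err_nonneg:
  assumes "continuous_on \<Omega> f"
  shows "0 \<le> best_approx_err n \<Omega> f"
  unfolding best_approx_err_def
proof (rule cINF_greatest)
  show "polys n \<noteq> {}" using one_in_polys by blast
  fix p :: "real^'d \<Rightarrow> real" assume "p \<in> polys n"
  then have "continuous_on \<Omega> (\<lambda>x. f x - p x)"
    using assms continuous_on_polys by (intro continuous_intros)
  then show "0 \<le> (SUP x\<in>\<Omega>. \<bar>f x - p x\<bar>)"
    by (rule SUP_abs_nonneg[OF compact_\<Omega> _ \<Omega>_nonempty])
qed

end

theorem proposition1:
  fixes \<Omega> :: "(real^'d) set" and \<mu> :: "(real^'d) measure" and n :: nat
    and M :: nat and xs :: "nat \<Rightarrow> real^'d" and w :: "nat \<Rightarrow> real"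
    and N :: nat and \<phi> :: "nat \<Rightarrow> real^'d \<Rightarrow> real"
    and A B :: real and f :: "real^'d \<Rightarrow> real"
  assumes "compact \<Omega>"
    and "sets \<mu> = sets (restrict_space lborel \<Omega>)"
    and "finite_measure \<mu>"
    and "measure \<mu> \<Omega> > 0"
    and nodes: "\<forall>i<M. xs i \<in> \<Omega>"
    and weights: "\<forall>i<M. w i > 0"
    and basis_poly: "\<forall>j<N. \<phi> j \<in> polys n"
    and orthonormal: "\<forall>i<N. \<forall>j<N. (\<integral>x. \<phi> i x * \<phi> j x \<partial>\<mu>) = (if i = j then 1 else 0)"
    and spanning: "\<forall>p\<in>polys n. \<exists>c. \<forall>x\<in>\<Omega>. p x = (\<Sum>j<N. c j * \<phi> j x)"
    and "A > 0" and "B > 0"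
    and MZ: "\<forall>p\<in>polys n. A * (L2norm \<mu> p)\<^sup>2 \<le> cub w xs M (\<lambda>x. (p x)\<^sup>2)
                          \<and> cub w xs M (\<lambda>x. (p x)\<^sup>2) \<le> B * (L2norm \<mu> p)\<^sup>2"
    and "max \<bar>A - 1\<bar> \<bar>B - 1\<bar> < 1"
    and "continuous_on \<Omega> f"
  shows "L2norm \<mu> (\<lambda>x. f x - lsq_approx w xs M \<phi> N f x)
           \<le> (1 + sqrt (cond2 (gram w xs M \<phi>) N)) * sqrt (measure \<mu> \<Omega>) * best_approx_err n \<Omega> f
       \<and> (1 + sqrt (cond2 (gram w xs M \<phi>) N)) * sqrt (measure \<mu> \<Omega>) * best_approx_err n \<Omega> f
           \<le> (1 + sqrt ((1 + max \<bar>A - 1\<bar> \<bar>B - 1\<bar>) / (1 - max \<bar>A - 1\<bar> \<bar>B - 1\<bar>)))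
              * sqrt (measure \<mu> \<Omega>) * best_approx_err n \<Omega> f
       \<and> ((\<Sum>i<M. w i) = measure \<mu> \<Omega> \<longrightarrow>
            L2norm \<mu> (\<lambda>x. f x - lsq_approx w xs M \<phi> N f x)
              \<le> (1 + 1 / sqrt A) * sqrt (measure \<mu> \<Omega>) * best_approx_err n \<Omega> f
          \<and> (1 + 1 / sqrt A) * sqrt (measure \<mu> \<Omega>) * best_approx_err n \<Omega> f
              \<le> (1 + 1 / sqrt (1 - max \<bar>A - 1\<bar> \<bar>B - 1\<bar>)) * sqrt (measure \<mu> \<Omega>) * best_approx_err n \<Omega> f)"
proof -
  interpret weighted_least_squares \<Omega> \<mu> n M xs w N \<phi> A B
    by (rule weighted_least_squares.intro) (fact assms)+
  define \<eta> where "\<eta> = max \<bar>A - 1\<bar> \<bar>B - 1\<bar>"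
  have \<eta>: "1 - \<eta> \<le> A" "B \<le> 1 + \<eta>" "\<eta> < 1"
    using \<open>max \<bar>A - 1\<bar> \<bar>B - 1\<bar> < 1\<close> unfolding \<eta>_def by linarith+
  have E: "0 \<le> best_approx_err n \<Omega> f"
    by (rule best_approx_err_nonneg) fact
  have "cond2 G N \<le> B / A" by (rule cond2_gram_le)
  also have "\<dots> \<le> (1 + \<eta>) / (1 - \<eta>)"
    by (rule frac_le) (use \<eta> \<open>A > 0\<close> \<open>B > 0\<close> in linarith)+
  finally have "(1 + sqrt (cond2 G N)) * sqrt (measure \<mu> \<Omega>) * best_approx_err n \<Omega> f
      \<le> (1 + sqrt ((1 + \<eta>) / (1 - \<eta>))) * sqrt (measure \<mu> \<Omega>) * best_approx_err n \<Omega> f"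
    using E by (intro mult_right_mono) auto
  moreover have "(1 + 1 / sqrt A) * sqrt (measure \<mu> \<Omega>) * best_approx_err n \<Omega> f
      \<le> (1 + 1 / sqrt (1 - \<eta>)) * sqrt (measure \<mu> \<Omega>) * best_approx_err n \<Omega> f"
    using \<eta> E by (intro mult_right_mono add_left_mono divide_left_mono) auto
  ultimately show ?thesis
    using lsq_error_le_cond2 lsq_error_le_exact_constants \<open>continuous_on \<Omega> f\<close>
    unfolding \<eta>_def by blast
qed

end
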